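(* The set $\mathrm{Diag}\,\mathbb P=\{p^{(k)}_k:k\in\mathbb N\}$ is not (R)-dense. Moreover, $\lim_{k\to+\infty}p^{(k+1)}_{k+1}/p^{(k)}_k=+\infty$, and $R^d(\mathrm{Diag}\,\mathbb P)\cap(0,+\infty)=\emptyset$.
   Context: Let $p_n$ denote the $n$-th prime number. Define $p^{(0)}_n=n$ and recursively $p^{(k+1)}_n=p_{p^{(k)}_n}$ for $k\in\mathbb N_0$. For $A\subset\mathbb N$, its ratio set is $R(A)=\{a/b:a,b\in A\}$; $A$ is (R)-dense if $R(A)$ is dense in $(0,+\infty)$. For $B\subset(0,+\infty)$, $B^d$ denotes the set of accumulation points of $B$, and $R^d(A)=(R(A))^d$. *)

theory Defs
  imports "HOL-Analysis.Analysis" "HOL-Computational_Algebra.Primes"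
begin

text \<open>The n-th prime, 1-indexed: nth_prime 1 = 2, nth_prime 2 = 3, ...
  (The value at 0 is irrelevant for the statement.)\<close>
definition nth_prime :: "nat \<Rightarrow> nat" where
  "nth_prime n = enumerate {p::nat. prime p} (n - 1)"

definition iter_prime :: "nat \<Rightarrow> nat \<Rightarrow> nat" where
  "iter_prime k n = (nth_prime ^^ k) n"

definition diagP :: "nat set" where
  "diagP = {iter_prime k k | k. k \<ge> 1}"

definition ratio_set :: "nat set \<Rightarrow> real set" where
  "ratio_set A = {real a / real b | a b. a \<in> A \<and> b \<in> A}"

definition R_dense :: "nat set \<Rightarrow> bool" where
  "R_dense A \<longleftrightarrow> {0<..} \<subseteq> closure (ratio_set A)"

definition acc_points :: "real set \<Rightarrow> real set" where
  "acc_points B = {x. x islimpt B}"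

end

theory Submission
  imports Defs
begin

(* Chebyshev's bound (the product of the primes up to n is at most 4^n) gives
   t * pi(n) <= t * 4^t + n for every t, hence p_n / n tends to infinity.  As
   p^(k+1)_(k+1) >= p_m for m = p^(k)_k, the quotients d_(k+1) / d_k of the diagonal
   sequence d_k = p^(k)_k tend to infinity.  So a quotient d_i / d_j in a band (1/c, c)
   is either 1 or has i, j below a bound depending on c: each band contains only
   finitely many ratios, and no x > 0 is an accumulation point.  Density would then
   force the countable set R(Diag P) to contain (0, +infinity). *)

lemma binomial_odd_middle_le: "(2*m+1) choose m \<le> (4::nat) ^ m"
proof -
  have sym: "(2*m+1) choose m = (2*m+1) choose (m+1)"
    by (metis add_diff_cancel_left' binomial_symmetric le_add2 mult_2 add.assoc add.commute)
  have "((2*m+1) choose m) + ((2*m+1) choose (m+1)) = (\<Sum>k\<in>{m, m+1}. (2*m+1) choose k)"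
    by simp
  also have "\<dots> \<le> (\<Sum>k\<le>2*m+1. (2*m+1) choose k)"
    by (rule sum_mono2) auto
  also have "\<dots> = 2 ^ (2*m+1)"
    by (rule choose_row_sum)
  finally show ?thesis
    using sym by (simp add: power_mult)
qed

lemma prod_primes_dvd:
  fixes C :: nat
  assumes "finite T" "\<And>p. p \<in> T \<Longrightarrow> prime p \<and> p dvd C"
  shows "\<Prod>T dvd C"
  using assms
proof (induction T rule: finite_induct)
  case empty
  then show ?case by simp
next
  case (insert p T)
  have "coprime p (\<Prod>T)"
  proof (rule prod_coprime_right)
    fix q assume "q \<in> T"
    then show "coprime p q"
      using insert by (metis insertCI primes_coprime)
  qed
  with insert show ?case
    by (simp add: divides_mult)
qed

lemma prod_primes_middle_le: "\<Prod>{p::nat. prime p \<and> m+1 < p \<and> p \<le> 2*m+1} \<le> 4 ^ m"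
proof -
  have "\<Prod>{p::nat. prime p \<and> m+1 < p \<and> p \<le> 2*m+1} dvd ((2*m+1) choose m)"
  proof (rule prod_primes_dvd)
    fix p assume "p \<in> {p::nat. prime p \<and> m+1 < p \<and> p \<le> 2*m+1}"
    then have p: "prime p" "m+1 < p" "p \<le> 2*m+1" by auto
    have "fact (2*m+1) = fact m * fact (m+1) * ((2*m+1) choose m)"
      using binomial_fact_lemma[of m "2*m+1"] by (simp add: mult_2)
    moreover have "p dvd fact (2*m+1)" "\<not> p dvd fact m" "\<not> p dvd fact (m+1)"
      using p by (simp_all add: prime_dvd_fact_iff[OF p(1)] del: fact_Suc)
    ultimately show "prime p \<and> p dvd ((2*m+1) choose m)"
      using p(1) by (metis prime_dvd_mult_iff)
  qed auto
  then have "\<Prod>{p::nat. prime p \<and> m+1 < p \<and> p \<le> 2*m+1} \<le> (2*m+1) choose m"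
    by (rule dvd_imp_le) simp
  then show ?thesis
    using binomial_odd_middle_le order_trans by blast
qed

lemma prod_primes_le_four_pow: "\<Prod>{p::nat. prime p \<and> p \<le> n} \<le> 4 ^ n"
proof (induction n rule: less_induct)
  case (less n)
  consider "n < 2" | "n = 2" | "n > 2" "even n" | m where "n = 2*m+1" "m \<ge> 1"
  proof (cases "n \<le> 2")
    case False
    then show thesis
      using that(3,4) by (cases "even n") (auto elim!: oddE)
  qed (use that(1,2) in linarith)
  then show ?case
  proof cases
    case 1
    then have "{p::nat. prime p \<and> p \<le> n} = {}" by (auto dest: prime_gt_1_nat)
    then show ?thesis by (simp only:) simp
  next
    case 2
    then have "{p::nat. prime p \<and> p \<le> n} = {2}" by (auto dest: prime_gt_1_nat)
    then show ?thesis using 2 by (simp only:) simp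
  next
    case 3
    then have "\<not> prime n" using prime_odd_nat by fastforce
    then have "{p::nat. prime p \<and> p \<le> n} = {p. prime p \<and> p \<le> n - 1}"
      by (intro Collect_cong) (auto simp: le_diff_conv2 dest: le_neq_implies_less)
    then have "\<Prod>{p::nat. prime p \<and> p \<le> n} = \<Prod>{p. prime p \<and> p \<le> n - 1}"
      by (rule arg_cong)
    also have "\<dots> \<le> 4 ^ (n-1)" using less[of "n-1"] 3 by simp
    also have "\<dots> \<le> 4 ^ n" by (rule power_increasing) auto
    finally show ?thesis .
  next
    case (4 m)
    have split: "{p::nat. prime p \<and> p \<le> n} =
        {p. prime p \<and> p \<le> m+1} \<union> {p. prime p \<and> m+1 < p \<and> p \<le> 2*m+1}"
      using 4 by auto
    have "\<Prod>{p::nat. prime p \<and> p \<le> n} =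
        \<Prod>{p::nat. prime p \<and> p \<le> m+1} * \<Prod>{p. prime p \<and> m+1 < p \<and> p \<le> 2*m+1}"
      unfolding split by (rule prod.union_disjoint) auto
    also have "\<dots> \<le> 4 ^ (m+1) * 4 ^ m"
      using less[of "m+1"] 4 prod_primes_middle_le by (intro mult_le_mono) auto
    also have "\<dots> = 4 ^ n"
      using 4 by (simp add: power_add[symmetric])
    finally show ?thesis .
  qed
qed

(* Split the primes up to n at 4^t: at most 4^t lie below, and the product of
   those above is at least (4^t)^(their number) but at most 4^n. *)
lemma card_primes_le_bound: "t * card {p::nat. prime p \<and> p \<le> n} \<le> t * 4 ^ t + n"
proof -
  define A where "A = {p::nat. prime p \<and> p \<le> n}"
  define A1 where "A1 = {p\<in>A. p \<le> 4^t}"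
  define A2 where "A2 = {p\<in>A. 4^t < p}"
  have fin: "finite A1" "finite A2" unfolding A1_def A2_def A_def by auto
  have A: "A = A1 \<union> A2" "A1 \<inter> A2 = {}" unfolding A1_def A2_def by auto
  have "A1 \<subseteq> {1..4^t}" unfolding A1_def A_def by (auto dest: prime_gt_0_nat)
  then have card_A1: "card A1 \<le> 4^t" using card_mono[of "{1..4^t}" A1] by simp
  have "(4::nat) ^ (t * card A2) = (\<Prod>p\<in>A2. 4^t)" by (simp add: power_mult)
  also have "\<dots> \<le> \<Prod>A2" by (rule prod_mono) (auto simp: A2_def)
  also have "\<dots> \<le> \<Prod>A1 * \<Prod>A2"
  proof -
    have "1 \<le> \<Prod>A1" unfolding A1_def A_def by (rule prod_ge_1) (auto dest: prime_gt_0_nat)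
    then show ?thesis by simp
  qed
  also have "\<dots> = \<Prod>A" using A fin by (simp add: prod.union_disjoint)
  also have "\<dots> \<le> 4^n" unfolding A_def by (rule prod_primes_le_four_pow)
  finally have "t * card A2 \<le> n" by simp
  moreover have "card A = card A1 + card A2" using A fin by (simp add: card_Un_disjoint)
  ultimately show ?thesis
    using card_A1 unfolding A_def[symmetric] by (simp add: add_mult_distrib2 add_mono)
qed

lemma nth_prime_ge: "n + 1 \<le> nth_prime n"
proof -
  have "i + 2 \<le> enumerate {p::nat. prime p} i" for i
  proof (induction i)
    case 0
    have "prime (enumerate {p::nat. prime p} 0)"
      using enumerate_in_set[OF primes_infinite] by simp
    then have "2 \<le> enumerate {p::nat. prime p} 0" by (rule prime_ge_2_nat)
    then show ?case by simp
  next
    case (Suc i)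
    then show ?case using enumerate_step[OF primes_infinite, of i] by simp
  qed
  from this[of "n - 1"] show ?thesis unfolding nth_prime_def by simp
qed

lemma mono_nth_prime: "mono nth_prime"
  unfolding mono_def nth_prime_def using primes_infinite by (simp add: diff_le_mono)

lemma card_primes_le_nth_prime: "N \<le> card {p::nat. prime p \<and> p \<le> nth_prime N}"
proof -
  let ?E = "enumerate {p::nat. prime p}"
  have "inj_on ?E {..<N}"
    using inj_enumerate[OF primes_infinite] by (simp add: inj_on_def inj_def)
  then have "N = card (?E ` {..<N})" by (simp add: card_image)
  also have "\<dots> \<le> card {p::nat. prime p \<and> p \<le> nth_prime N}"
    using enumerate_in_set[OF primes_infinite] primes_infinite
    by (intro card_mono) (auto simp: nth_prime_def)
  finally show ?thesis .
qed

lemma filterlim_nth_prime_div_at_top: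
  "filterlim (\<lambda>n. real (nth_prime n) / real n) at_top sequentially"
proof (subst filterlim_at_top, intro allI)
  fix Z :: real
  define t where "t = nat \<lceil>2*Z\<rceil>"
  show "\<forall>\<^sub>F n in sequentially. Z \<le> real (nth_prime n) / real n"
  proof (rule eventually_sequentiallyI)
    fix n :: nat assume n: "2 * 4^t + 1 \<le> n"
    have "t * n \<le> t * card {p. prime p \<and> p \<le> nth_prime n}"
      using card_primes_le_nth_prime by simp
    also have "\<dots> \<le> t * 4^t + nth_prime n"
      by (rule card_primes_le_bound)
    finally have "t * n \<le> t * 4^t + nth_prime n" .
    moreover have "t * (2 * 4^t) \<le> t * n"
      using n by simp
    ultimately have "t * n \<le> 2 * nth_prime n" by linarith
    then have "real t * real n \<le> 2 * real (nth_prime n)"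
      by (metis of_nat_mult of_nat_le_iff of_nat_numeral)
    moreover have "2 * Z * real n \<le> real t * real n"
      unfolding t_def by (rule mult_right_mono) linarith+
    ultimately have "Z * real n \<le> real (nth_prime n)" by linarith
    then show "Z \<le> real (nth_prime n) / real n"
      using n by (simp add: pos_le_divide_eq)
  qed
qed

lemma iter_prime_diag_ge: "k \<le> iter_prime k k"
proof -
  have "n \<le> (nth_prime ^^ j) n" for j n
  proof (induction j)
    case (Suc j)
    then show ?case using nth_prime_ge[of "(nth_prime ^^ j) n"] by simp
  qed simp
  then show ?thesis unfolding iter_prime_def .
qed

lemma nth_prime_iter_prime_diag_le: "nth_prime (iter_prime k k) \<le> iter_prime (Suc k) (Suc k)"
proof -
  have "(nth_prime ^^ k) k \<le> (nth_prime ^^ k) (Suc k)"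
    by (rule funpow_mono[OF mono_nth_prime]) simp
  then show ?thesis
    unfolding iter_prime_def using mono_nth_prime by (simp add: mono_def)
qed

lemma mono_iter_prime_diag: "mono (\<lambda>k. iter_prime k k)"
proof (rule mono_iff_le_Suc[THEN iffD2], intro allI)
  fix k
  have "iter_prime k k \<le> nth_prime (iter_prime k k)"
    using nth_prime_ge[of "iter_prime k k"] by simp
  also have "\<dots> \<le> iter_prime (Suc k) (Suc k)"
    by (rule nth_prime_iter_prime_diag_le)
  finally show "iter_prime k k \<le> iter_prime (Suc k) (Suc k)" .
qed

lemma filterlim_iter_prime_diag_quotient:
  "filterlim (\<lambda>k. real (iter_prime (k+1) (k+1)) / real (iter_prime k k)) at_top sequentially"
proof (rule filterlim_at_top_mono)
  have "filterlim (\<lambda>k. iter_prime k k) at_top sequentially"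
    by (rule filterlim_at_top_mono[OF filterlim_ident])
      (intro always_eventually allI iter_prime_diag_ge)
  then show "filterlim (\<lambda>k. real (nth_prime (iter_prime k k)) / real (iter_prime k k))
      at_top sequentially"
    by (rule filterlim_compose[OF filterlim_nth_prime_div_at_top])
  show "\<forall>\<^sub>F k in sequentially. real (nth_prime (iter_prime k k)) / real (iter_prime k k)
      \<le> real (iter_prime (k+1) (k+1)) / real (iter_prime k k)"
    using nth_prime_iter_prime_diag_le by (intro always_eventually allI divide_right_mono) simp_all
qed

lemma finite_ratio_set_band:
  fixes f :: "nat \<Rightarrow> nat"
  assumes "mono f" "0 < f 0" "c > 0"
    and "filterlim (\<lambda>k. real (f (Suc k)) / real (f k)) at_top sequentially"
  shows "finite (ratio_set (range f) \<inter> {1/c<..<c})"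
proof -
  obtain K where K: "\<And>k. K \<le> k \<Longrightarrow> c \<le> real (f (Suc k)) / real (f k)"
    using assms(4) unfolding filterlim_at_top eventually_sequentially by blast
  have pos: "real (f k) > 0" for k
    using assms(2) monoD[OF assms(1), of 0 k] by simp
  have grow: "c * real (f j) \<le> real (f (Suc m))" if "j \<le> m" "K \<le> m" for j m
  proof -
    have "c * real (f j) \<le> c * real (f m)"
      using assms(3) monoD[OF assms(1) \<open>j \<le> m\<close>] by simp
    also have "\<dots> \<le> real (f (Suc m))"
      using K[OF \<open>K \<le> m\<close>] pos[of m] by (simp add: pos_le_divide_eq)
    finally show ?thesis .
  qed
  have "ratio_set (range f) \<inter> {1/c<..<c} \<subseteq>
      insert 1 ((\<lambda>(i, j). real (f i) / real (f j)) ` ({..K} \<times> {..K}))"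
  proof
    fix r assume "r \<in> ratio_set (range f) \<inter> {1/c<..<c}"
    then obtain i j where r: "r = real (f i) / real (f j)" "1/c < r" "r < c"
      unfolding ratio_set_def by auto
    consider "i \<le> K" "j \<le> K" | "i = j" | "j < i" "K < i" | "i < j" "K < j"
      by linarith
    then show "r \<in> insert 1 ((\<lambda>(i, j). real (f i) / real (f j)) ` ({..K} \<times> {..K}))"
    proof cases
      case 1
      then show ?thesis using r(1) by (auto intro: image_eqI[where x = "(i, j)"])
    next
      case 2
      then show ?thesis using r(1) pos[of i] by simp
    next
      case 3
      then have "c * real (f j) \<le> real (f i)"
        using grow[of j "i - 1"] by simp
      then have "c \<le> r" using r(1) pos[of j] by (simp add: pos_le_divide_eq)
      then show ?thesis using r(3) by simp
    next
      case 4
      then have "c * real (f i) \<le> real (f j)"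
        using grow[of i "j - 1"] by simp
      then have "c * r \<le> 1" using r(1) pos[of j] by (simp add: divide_le_eq)
      then have "r \<le> 1/c" using assms(3) by (simp add: le_divide_eq mult.commute)
      then show ?thesis using r(2) by simp
    qed
  qed
  then show ?thesis by (rule finite_subset) simp
qed

lemma acc_points_ratio_set_lacunary:
  fixes f :: "nat \<Rightarrow> nat"
  assumes "mono f" "0 < f 0"
    and "filterlim (\<lambda>k. real (f (Suc k)) / real (f k)) at_top sequentially"
  shows "acc_points (ratio_set (range f)) \<inter> {0<..} = {}"
proof (rule ccontr)
  assume "acc_points (ratio_set (range f)) \<inter> {0<..} \<noteq> {}"
  then obtain x where x: "x > 0" "x islimpt ratio_set (range f)"
    unfolding acc_points_def by auto
  define c where "c = x + 1/x"
  define U where "U = {1/c<..<c}"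
  have "x < c" using x(1) by (simp add: c_def)
  then have "c > 0" using x(1) by linarith
  have "x * c = x * x + 1" using x(1) by (simp add: c_def field_simps)
  then have "1 < x * c" using x(1) by simp
  then have "1/c < x" using \<open>c > 0\<close> by (simp add: divide_less_eq mult.commute)
  with \<open>x < c\<close> have "x \<in> U" unfolding U_def by simp
  have "open U" unfolding U_def by simp
  have "x islimpt (ratio_set (range f) \<inter> U) \<union> (ratio_set (range f) - U)"
    using x(2) by (simp add: Int_Diff_Un)
  then have "x islimpt (ratio_set (range f) \<inter> U) \<or> x islimpt (ratio_set (range f) - U)"
    by (simp only: islimpt_Un)
  moreover have "\<not> x islimpt (ratio_set (range f) \<inter> U)"
    using finite_ratio_set_band[OF assms(1,2) \<open>c > 0\<close> assms(3)] islimpt_finite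
    unfolding U_def by blast
  moreover have "\<not> x islimpt (ratio_set (range f) - U)"
    using islimptE[OF _ \<open>x \<in> U\<close> \<open>open U\<close>] by blast
  ultimately show False by blast
qed

lemma not_R_dense_if_no_positive_acc_points:
  assumes "acc_points (ratio_set A) \<inter> {0<..} = {}"
  shows "\<not> R_dense A"
proof
  assume "R_dense A"
  then have "{0<..} \<subseteq> ratio_set A"
    using assms unfolding R_dense_def closure_def acc_points_def by blast
  then have "{0<..<1} \<subseteq> ratio_set A"
    by (meson greaterThanLessThan_iff greaterThan_iff subset_iff)
  moreover have "countable (ratio_set A)"
  proof -
    have "ratio_set A = (\<lambda>(a, b). real a / real b) ` (A \<times> A)"
      unfolding ratio_set_def by auto
    then show ?thesis by simp
  qed
  ultimately have "countable {0<..<1::real}"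
    by (rule countable_subset)
  then show False
    using uncountable_open_interval[of 0 1] by simp
qed

theorem theorem12:
  shows "\<not> R_dense diagP \<and>
    filterlim (\<lambda>k. real (iter_prime (k+1) (k+1)) / real (iter_prime k k)) at_top sequentially \<and>
    acc_points (ratio_set diagP) \<inter> {0<..} = {}"
proof -
  let ?d = "\<lambda>k. iter_prime (Suc k) (Suc k)"
  have "diagP = range ?d"
    unfolding diagP_def by (force simp: image_iff Suc_le_eq gr0_conv_Suc)
  moreover have "acc_points (ratio_set (range ?d)) \<inter> {0<..} = {}"
  proof (rule acc_points_ratio_set_lacunary)
    show "mono ?d" using mono_iter_prime_diag by (simp add: mono_def)
    show "0 < ?d 0" using iter_prime_diag_ge[of 1] by simp
    show "filterlim (\<lambda>k. real (?d (Suc k)) / real (?d k)) at_top sequentially"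
      using filterlim_iter_prime_diag_quotient
        filterlim_sequentially_Suc[of "\<lambda>k. real (iter_prime (Suc k) (Suc k)) / real (iter_prime k k)"]
      by simp
  qed
  ultimately show ?thesis
    using filterlim_iter_prime_diag_quotient not_R_dense_if_no_positive_acc_points by simp
qed

end
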